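(* Let $W,V$ be subspaces of $\mathbb{R}^n$ with $\mathbb{R}^n=W\oplus V^\perp$, and let $\mu\in\mathcal{P}_2(W)$ be a probabilistic frame for $W$ with frame operator $\mathbf{S}_\mu$. A measurable map $T:W\to V$ is such that $T_\#\mu$ is an oblique dual probabilistic frame of $\mu$ on $V$ with respect to the coupling $(\mathbf{Id},T)_\#\mu$ if and only if there is a measurable map $h:W\to V$ with $h_\#\mu\in\mathcal{P}_2(V)$ and $\int_W\mathbf{x}\,h(\mathbf{x})^t\,d\mu(\mathbf{x})=\mathbf{0}_{n\times n}$ such that for all $\mathbf{x}\in W$, $$T(\mathbf{x})=\boldsymbol{\pi}_{VW^\perp}\mathbf{S}_\mu^\dagger\mathbf{x}+h(\mathbf{x}).$$
   Context: $\mathcal{P}_2(S)$ denotes Borel probability measures on $\mathbb{R}^n$ concentrated on the subspace $S$ with finite second moment. $\mu\in\mathcal{P}_2(W)$ is a probabilistic frame for $W$ if there exist $0<A\le B<\infty$ with $A\|\mathbf{x}\|^2\le\int_W|\langle\mathbf{x},\mathbf{y}\rangle|^2d\mu(\mathbf{y})\le B\|\mathbf{x}\|^2$ for all $\mathbf{x}\in W$; its frame operator is $\mathbf{S}_\mu=\int_W\mathbf{y}\mathbf{y}^td\mu(\mathbf{y})$, with Moore–Penrose inverse $\mathbf{S}_\mu^\dagger$. $(\mathbf{Id},T)_\#\mu$ is the pushforward of $\mu$ under $\mathbf{x}\mapsto(\mathbf{x},T(\mathbf{x}))$. $\boldsymbol{\pi}_{WV^\perp}$ is the oblique projection onto $W$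 along $V^\perp$ and $\boldsymbol{\pi}_{VW^\perp}$ the oblique projection onto $V$ along $W^\perp$. $\nu\in\mathcal{P}_2(V)$ is an oblique dual probabilistic frame of $\mu$ on $V$ with respect to a coupling $\gamma$ of $\mu$ and $\nu$ if $\int_{W\times V}\mathbf{x}\mathbf{y}^t\,d\gamma(\mathbf{x},\mathbf{y})=\boldsymbol{\pi}_{WV^\perp}$. *)

theory Defs
  imports "HOL-Analysis.Analysis" "HOL-Probability.Probability"
begin

definition outer :: "real^'n \<Rightarrow> real^'n \<Rightarrow> real^'n^'n" where
  "outer x y = (\<chi> i j. x $ i * y $ j)"

definition P2 :: "(real^'n) set \<Rightarrow> (real^'n) measure \<Rightarrow> bool" where
  "P2 S \<mu> \<longleftrightarrow> prob_space \<mu> \<and> sets \<mu> = sets borel \<and> S \<in> sets \<mu> \<and> emeasure \<mu> S = 1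
     \<and> integrable \<mu> (\<lambda>y. (norm y)\<^sup>2)"

definition prob_frame :: "(real^'n) set \<Rightarrow> (real^'n) measure \<Rightarrow> bool" where
  "prob_frame W \<mu> \<longleftrightarrow> P2 W \<mu> \<and>
     (\<exists>A B. 0 < A \<and> A \<le> B \<and> B < \<infinity> \<and>
        (\<forall>x\<in>W. A * (norm x)\<^sup>2 \<le> (\<integral>y. \<bar>x \<bullet> y\<bar>\<^sup>2 \<partial>\<mu>) \<and> (\<integral>y. \<bar>x \<bullet> y\<bar>\<^sup>2 \<partial>\<mu>) \<le> B * (norm x)\<^sup>2))"

definition frame_op :: "(real^'n) measure \<Rightarrow> real^'n^'n" where
  "frame_op \<mu> = (\<integral>y. outer y y \<partial>\<mu>)"

definition mp_pinv :: "real^'n^'n \<Rightarrow> real^'n^'n" where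
  "mp_pinv A = (THE B. A ** B ** A = A \<and> B ** A ** B = B \<and>
                  transpose (A ** B) = A ** B \<and> transpose (B ** A) = B ** A)"

text \<open>Oblique projection onto V along U (meaningful when R^n = V \<oplus> U).\<close>
definition oblique_proj :: "(real^'n) set \<Rightarrow> (real^'n) set \<Rightarrow> real^'n^'n" where
  "oblique_proj V U = (THE P. \<forall>x. P *v x \<in> V \<and> x - P *v x \<in> U)"

definition coupling :: "((real^'n) \<times> (real^'n)) measure \<Rightarrow> (real^'n) measure \<Rightarrow> (real^'n) measure \<Rightarrow> bool" where
  "coupling \<gamma> \<mu> \<nu> \<longleftrightarrow> prob_space \<gamma> \<and> sets \<gamma> = sets (borel \<Otimes>\<^sub>M borel) \<and>
     distr \<gamma> borel fst = \<mu> \<and> distr \<gamma> borel snd = \<nu>"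

definition oblique_dual ::
  "(real^'n) set \<Rightarrow> (real^'n) set \<Rightarrow> (real^'n) measure \<Rightarrow> (real^'n) measure
     \<Rightarrow> ((real^'n) \<times> (real^'n)) measure \<Rightarrow> bool" where
  "oblique_dual W V \<mu> \<nu> \<gamma> \<longleftrightarrow> P2 V \<nu> \<and> coupling \<gamma> \<mu> \<nu> \<and>
     (\<integral>p. outer (fst p) (snd p) \<partial>\<gamma>) = oblique_proj W (orthogonal_comp V)"

end

theory Submission
  imports Defs
begin

text \<open>
  For the coupling (Id, T)_# mu the oblique duality condition reads
  int x T(x)^t dmu(x) = pi_{W V^perp}, which is linear in T. The linear map
  T_0 = pi_{V W^perp} S^dagger solves it: int x (T_0 x)^t dmu = S (S^dagger)^t pi_{V W^perp}^t
  = S^dagger S pi_{W V^perp}, where S^dagger S is the orthogonal projection onto (ker S)^perp.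
  The lower frame bound gives ker S = W^perp, so this projection fixes the range W of
  pi_{W V^perp}. Hence the solutions are exactly T_0 + h with int x h(x)^t dmu = 0, and since
  T_0 is linear, T and h are square integrable together.
\<close>

lemma outer_mult_vec: "outer x y *v v = (y \<bullet> v) *\<^sub>R x"
  by (simp add: vec_eq_iff outer_def matrix_vector_mult_def inner_vec_def sum_distrib_left
      mult.commute mult.left_commute)

lemma outer_mult_transpose: "outer x y ** transpose M = outer x (M *v y)"
  by (simp add: vec_eq_iff outer_def matrix_matrix_mult_def matrix_vector_mult_def transpose_def
      sum_distrib_left mult.commute mult.left_commute)

lemma outer_add_right: "outer x (a + b) = outer x a + outer x b"
  by (simp add: vec_eq_iff outer_def algebra_simps)

lemma norm_outer: "norm (outer (a::real^'n) b) = norm a * norm b"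
proof -
  have "outer a b $ i = a $ i *\<^sub>R b" for i
    by (simp add: outer_def vec_eq_iff)
  then have "norm (outer a b) = L2_set (\<lambda>i. \<bar>a $ i\<bar> * norm b) UNIV"
    unfolding norm_vec_def[of "outer a b"] by simp
  also have "\<dots> = L2_set (\<lambda>i. \<bar>a $ i\<bar>) UNIV * norm b"
    by (simp add: L2_set_left_distrib)
  also have "\<dots> = norm a * norm b"
    by (simp add: norm_vec_def)
  finally show ?thesis .
qed

lemma inner_transpose: "(u::real^'n) \<bullet> (transpose A *v v) = (A *v u) \<bullet> v"
  by (metis dot_lmul_matrix inner_commute transpose_matrix_vector)

lemma transpose_eq_self_iff_inner:
  "transpose (A::real^'n^'n) = A \<longleftrightarrow> (\<forall>u v. u \<bullet> (A *v v) = (A *v u) \<bullet> v)"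
proof
  assume "transpose A = A"
  then show "\<forall>u v. u \<bullet> (A *v v) = (A *v u) \<bullet> v"
    by (metis inner_transpose)
next
  assume sym: "\<forall>u v. u \<bullet> (A *v v) = (A *v u) \<bullet> v"
  have "transpose A *v v = A *v v" for v
  proof -
    define u where "u = transpose A *v v - A *v v"
    have "u \<bullet> (transpose A *v v) = u \<bullet> (A *v v)"
      using sym inner_transpose by metis
    then have "u \<bullet> u = 0"
      by (simp add: u_def inner_diff_right)
    then show ?thesis
      by (simp add: u_def)
  qed
  then show "transpose A = A"
    by (simp add: matrix_eq)
qed

section \<open>Oblique projections\<close>

lemma direct_sum_component_unique:
  assumes "A \<inter> U = {0}" "subspace A" "subspace U"
    and "a \<in> A" "x - a \<in> U" "a' \<in> A" "x - a' \<in> U"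
  shows "a = a'"
proof -
  have "a - a' \<in> A"
    using assms by (simp add: subspace_diff)
  moreover have "a - a' \<in> U"
    using subspace_diff[OF assms(3,7,5)] by simp
  ultimately have "a - a' \<in> A \<inter> U"
    by blast
  then show ?thesis
    using assms(1) by simp
qed

lemma oblique_proj_eqI:
  assumes "subspace A" "subspace U" "A \<inter> U = {0}"
    and P: "\<And>x. P *v x \<in> A \<and> x - P *v x \<in> U"
  shows "oblique_proj A U = P"
  unfolding oblique_proj_def
proof (rule the_equality)
  fix P' assume "\<forall>x. P' *v x \<in> A \<and> x - P' *v x \<in> U"
  then have "P' *v x = P *v x" for x
    using direct_sum_component_unique[OF assms(3,1,2), of "P' *v x" x "P *v x"] P by blast
  then show "P' = P"
    by (simp add: matrix_eq)
qed (use P in blast)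

lemma oblique_proj_mem:
  assumes "subspace A" "subspace U" "A + U = UNIV" "A \<inter> U = {0}"
  shows "oblique_proj A U *v x \<in> A" and "x - oblique_proj A U *v x \<in> U"
proof -
  have "\<exists>a. a \<in> A \<and> x - a \<in> U" for x
  proof -
    obtain a u where "a \<in> A" "u \<in> U" "x = a + u"
      using assms(3) set_plus_elim by blast
    then show ?thesis
      by force
  qed
  then obtain f where f: "\<And>x. f x \<in> A \<and> x - f x \<in> U"
    by metis
  have f_unique: "f x = a" if "a \<in> A" "x - a \<in> U" for x a
    using direct_sum_component_unique[OF assms(4,1,2)] f that by blast
  have "linear f"
  proof
    fix x y
    show "f (x + y) = f x + f y"
      using f by (intro f_unique) (simp_all add: assms subspace_add add_diff_add)
  next
    fix c :: real and x
    show "f (c *\<^sub>R x) = c *\<^sub>R f x"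
      using f by (intro f_unique) (simp_all add: assms subspace_scale flip: scaleR_diff_right)
  qed
  then have "oblique_proj A U = matrix f"
    using f assms by (intro oblique_proj_eqI) (simp_all add: matrix_works)
  then show "oblique_proj A U *v x \<in> A" and "x - oblique_proj A U *v x \<in> U"
    using f \<open>linear f\<close> by (simp_all add: matrix_works)
qed

lemma oblique_proj_fixes:
  assumes "subspace A" "subspace U" "A + U = UNIV" "A \<inter> U = {0}" "a \<in> A"
  shows "oblique_proj A U *v a = a"
  using direct_sum_component_unique[OF assms(4,1,2) oblique_proj_mem[OF assms(1-4)] assms(5)]
    subspace_0[OF assms(2)]
  by simp

lemma oblique_proj_annihilates:
  assumes "subspace A" "subspace U" "A + U = UNIV" "A \<inter> U = {0}" "u \<in> U"
  shows "oblique_proj A U *v u = 0"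
  using direct_sum_component_unique[OF assms(4,1,2) _ _ oblique_proj_mem[OF assms(1-4)], of 0 u]
    subspace_0[OF assms(1)] assms(5)
  by simp

lemma Int_orthogonal_comp_swap:
  fixes W V :: "(real^'n) set"
  assumes "subspace V" and "W + orthogonal_comp V = UNIV"
  shows "V \<inter> orthogonal_comp W = {0}"
proof -
  have "v = 0" if v: "v \<in> V" "v \<in> orthogonal_comp W" for v
  proof -
    obtain a b where ab: "a \<in> W" "b \<in> orthogonal_comp V" "v = a + b"
      using assms(2) set_plus_elim by blast
    have "v \<bullet> a = 0" "v \<bullet> b = 0"
      using v ab by (auto simp: orthogonal_comp_def orthogonal_def inner_commute)
    then have "v \<bullet> v = 0"
      using ab(3) by (simp add: inner_add_right)
    then show ?thesis
      by simp
  qed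
  then show ?thesis
    using subspace_0[OF assms(1)] subspace_0[OF subspace_orthogonal_comp] by blast
qed

lemma transpose_oblique_proj:
  fixes W V :: "(real^'n) set"
  assumes W: "subspace W" and V: "subspace V"
    and sum: "W + orthogonal_comp V = UNIV" and int: "W \<inter> orthogonal_comp V = {0}"
  shows "transpose (oblique_proj W (orthogonal_comp V)) = oblique_proj V (orthogonal_comp W)"
    and "oblique_proj V (orthogonal_comp W) *v x \<in> V"
proof -
  let ?R = "oblique_proj W (orthogonal_comp V)"
  have R_ker: "?R *v u = 0" if "u \<in> orthogonal_comp V" for u
    by (rule oblique_proj_annihilates[OF W subspace_orthogonal_comp sum int that])
  have R_fix: "?R *v w = w" if "w \<in> W" for w
    by (rule oblique_proj_fixes[OF W subspace_orthogonal_comp sum int that])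
  have in_V: "transpose ?R *v x \<in> V" for x
  proof -
    have "y \<bullet> (transpose ?R *v x) = 0" if "y \<in> orthogonal_comp V" for y
      using R_ker[OF that] by (simp only: inner_transpose inner_zero_left)
    then have "transpose ?R *v x \<in> orthogonal_comp (orthogonal_comp V)"
      unfolding orthogonal_comp_def[of "orthogonal_comp V"] orthogonal_def by blast
    then show ?thesis
      using orthogonal_comp_self[OF V] by simp
  qed
  have in_W_perp: "x - transpose ?R *v x \<in> orthogonal_comp W" for x
  proof -
    have "y \<bullet> (x - transpose ?R *v x) = 0" if "y \<in> W" for y
      using R_fix[OF that] by (simp only: inner_diff_right inner_transpose inner_commute diff_self)
    then show ?thesis
      unfolding orthogonal_comp_def orthogonal_def by blast
  qed
  have "oblique_proj V (orthogonal_comp W) = transpose ?R"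
    using in_V in_W_perp V Int_orthogonal_comp_swap[OF V sum]
    by (intro oblique_proj_eqI) (simp_all add: subspace_orthogonal_comp)
  then show "transpose ?R = oblique_proj V (orthogonal_comp W)"
    and "oblique_proj V (orthogonal_comp W) *v x \<in> V"
    using in_V by simp_all
qed

section \<open>Moore-Penrose inverses\<close>

lemma matrix_diff_ldistrib: "(A::real^'n^'m) ** (B - C) = A ** B - A ** C"
  by (vector matrix_matrix_mult_def sum_subtractf right_diff_distrib)

lemma matrix_add_rdistrib: "((A::real^'n^'m) + B) ** C = A ** C + B ** C"
  by (vector matrix_matrix_mult_def sum.distrib distrib_right)

lemma matrix_diff_rdistrib: "((A::real^'n^'m) - B) ** C = A ** C - B ** C"
  by (vector matrix_matrix_mult_def sum_subtractf left_diff_distrib)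

lemma transpose_diff: "transpose ((A::real^'n^'m) - B) = transpose A - transpose B"
  by (simp add: transpose_def vec_eq_iff)

lemma transpose_zero [simp]: "transpose 0 = 0"
  by (simp add: transpose_def vec_eq_iff)

definition penrose_inverse :: "real^'n^'n \<Rightarrow> real^'n^'n \<Rightarrow> bool" where
  "penrose_inverse A B \<longleftrightarrow> A ** B ** A = A \<and> B ** A ** B = B \<and>
     transpose (A ** B) = A ** B \<and> transpose (B ** A) = B ** A"

lemma penrose_inverse_unique:
  assumes "penrose_inverse A B" and "penrose_inverse A C"
  shows "B = C"
proof -
  have b1: "A ** B ** A = A" and b2: "B ** A ** B = B" and b3: "transpose (A ** B) = A ** B"
    and b4: "transpose (B ** A) = B ** A"
    and c1: "A ** C ** A = A" and c2: "C ** A ** C = C" and c3: "transpose (A ** C) = A ** C"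
    and c4: "transpose (C ** A) = C ** A"
    using assms unfolding penrose_inverse_def by blast+
  have AB: "A ** B = A ** C"
  proof -
    have "A ** B = transpose (A ** C ** A ** B)"
      using b3 c1 by simp
    also have "\<dots> = transpose (A ** B) ** transpose (A ** C)"
      by (simp add: matrix_transpose_mul matrix_mul_assoc)
    also have "\<dots> = A ** C"
      using b1 b3 c3 by (simp add: matrix_mul_assoc)
    finally show ?thesis .
  qed
  have BA: "B ** A = C ** A"
  proof -
    have "B ** A = transpose (B ** (A ** C ** A))"
      using b4 c1 by simp
    also have "\<dots> = transpose (C ** A) ** transpose (B ** A)"
      by (simp add: matrix_transpose_mul matrix_mul_assoc)
    also have "\<dots> = C ** (A ** B ** A)"
      using b4 c4 by (simp add: matrix_mul_assoc)
    also have "\<dots> = C ** A"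
      using b1 by simp
    finally show ?thesis .
  qed
  have "B = B ** A ** C"
    using b2 AB by (metis matrix_mul_assoc)
  also have "\<dots> = C"
    using BA c2 by simp
  finally show ?thesis .
qed

lemma mp_pinv_eqI: "penrose_inverse A B \<Longrightarrow> mp_pinv A = B"
  unfolding mp_pinv_def penrose_inverse_def[symmetric]
  using penrose_inverse_unique by blast

text \<open>Q is meant to be the orthogonal projection onto the kernel of S; the invertibility of
  S + Q forces its range to be the whole kernel.\<close>

lemma penrose_inverse_kernel_projection:
  assumes S: "transpose S = S" and Q: "transpose Q = Q" "Q ** Q = Q" and SQ: "S ** Q = 0"
    and G: "G ** (S + Q) = mat 1" "(S + Q) ** G = mat 1"
  shows "penrose_inverse S (G - Q)"
proof -
  have QS: "Q ** S = 0"
    using arg_cong[OF SQ, of transpose] S Q by (simp add: matrix_transpose_mul)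
  have QG: "Q ** G = Q"
    by (metis G(2) Q(2) QS add_0 matrix_add_ldistrib matrix_mul_assoc matrix_mul_rid)
  have GQ: "G ** Q = Q"
    by (metis G(1) Q(2) SQ add_0 matrix_add_rdistrib matrix_mul_assoc matrix_mul_lid)
  have SB: "S ** (G - Q) = mat 1 - Q"
    using G(2) QG SQ by (simp add: matrix_diff_ldistrib matrix_add_rdistrib eq_diff_eq)
  have BS: "(G - Q) ** S = mat 1 - Q"
    using G(1) GQ QS by (simp add: matrix_diff_rdistrib matrix_add_ldistrib eq_diff_eq)
  have sym: "transpose (mat 1 - Q) = mat 1 - Q"
    using Q by (simp add: transpose_diff)
  show ?thesis
    unfolding penrose_inverse_def
    by (simp add: SB BS sym flip: matrix_mul_assoc)
      (simp add: matrix_diff_rdistrib matrix_diff_ldistrib QS QG Q(2))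
qed

lemma invertible_symmetric_add_kernel_projection:
  fixes S Q :: "real^'n^'n"
  assumes S: "transpose S = S" and SQ: "S ** Q = 0" and Q: "\<And>x. S *v x = 0 \<Longrightarrow> Q *v x = x"
  shows "invertible (S + Q)"
  unfolding invertible_left_inverse matrix_left_invertible_ker
proof (intro allI impI)
  fix x assume x: "(S + Q) *v x = 0"
  then have Sx: "S *v x = - (Q *v x)"
    by (simp add: matrix_vector_mult_add_rdistrib eq_neg_iff_add_eq_0)
  have "S *v (S *v x + Q *v x) = 0"
    using x by (simp add: matrix_vector_mult_add_rdistrib)
  then have "S *v (S *v x) = 0"
    using SQ by (simp add: matrix_vector_right_distrib matrix_vector_mul_assoc)
  then have "(S *v x) \<bullet> (S *v x) = 0"
    using S by (metis transpose_eq_self_iff_inner inner_zero_right)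
  then show "x = 0"
    using Sx Q[of x] by simp
qed

lemma penrose_inverse_mp_pinv_symmetric:
  fixes S :: "real^'n^'n"
  assumes S: "transpose S = S"
  shows "penrose_inverse S (mp_pinv S)"
proof -
  define K where "K = {x. S *v x = 0}"
  define Q where "Q = oblique_proj K (orthogonal_comp K)"
  have K: "subspace K"
    unfolding K_def by (simp add: subspace_def matrix_vector_right_distrib matrix_vector_mult_scaleR)
  note K_sum = K subspace_orthogonal_comp subspace_sum_orthogonal_comp[OF K] orthogonal_Int_0[OF K]
  have Q_K: "Q *v x \<in> K" for x
    unfolding Q_def by (rule oblique_proj_mem(1)[OF K_sum])
  have Q_fix: "Q *v k = k" if "k \<in> K" for k
    unfolding Q_def by (rule oblique_proj_fixes[OF K_sum that])
  have "transpose Q = Q"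
    unfolding Q_def using transpose_oblique_proj(1)[OF K K K_sum(3,4)] .
  moreover have "Q ** Q = Q"
    using Q_K Q_fix by (simp add: matrix_eq flip: matrix_vector_mul_assoc)
  moreover have "S ** Q = 0"
    using Q_K by (simp add: matrix_eq K_def flip: matrix_vector_mul_assoc)
  moreover obtain G where "G ** (S + Q) = mat 1" "(S + Q) ** G = mat 1"
    using invertible_symmetric_add_kernel_projection[OF S \<open>S ** Q = 0\<close>] Q_fix
    unfolding invertible_def K_def by blast
  ultimately have "penrose_inverse S (G - Q)"
    by (rule penrose_inverse_kernel_projection[OF S])
  then show ?thesis
    by (simp add: mp_pinv_eqI)
qed

lemma penrose_inverse_mult_fixes:
  assumes B: "penrose_inverse A B" and w: "\<And>z. A *v z = 0 \<Longrightarrow> z \<bullet> w = 0"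
  shows "(B ** A) *v w = w"
proof -
  define E where "E = B ** A"
  have E_sym: "u \<bullet> (E *v v) = (E *v u) \<bullet> v" for u v
    using B transpose_eq_self_iff_inner unfolding E_def penrose_inverse_def by blast
  have "A *v (u - E *v u) = 0" for u
    using B by (simp add: E_def penrose_inverse_def matrix_vector_mult_diff_distrib
        matrix_vector_mul_assoc matrix_mul_assoc)
  then have "(u - E *v u) \<bullet> w = 0" for u
    by (rule w)
  then have "u \<bullet> (w - E *v w) = 0" for u
    by (simp add: E_sym inner_diff_left inner_diff_right)
  from this[of "w - E *v w"] show ?thesis
    by (simp add: E_def)
qed

lemma symmetric_mult_transpose_oblique_proj_pinv:
  fixes W V :: "(real^'n) set" and S :: "real^'n^'n"
  assumes W: "subspace W" and V: "subspace V"
    and sum: "W + orthogonal_comp V = UNIV" and int: "W \<inter> orthogonal_comp V = {0}"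
    and S: "transpose S = S" and ker: "\<And>z. S *v z = 0 \<Longrightarrow> z \<in> orthogonal_comp W"
  shows "S ** transpose (oblique_proj V (orthogonal_comp W) ** mp_pinv S)
    = oblique_proj W (orthogonal_comp V)"
proof -
  let ?R = "oblique_proj W (orthogonal_comp V)"
  have pinv: "penrose_inverse S (mp_pinv S)"
    by (rule penrose_inverse_mp_pinv_symmetric[OF S])
  have "S ** transpose (oblique_proj V (orthogonal_comp W) ** mp_pinv S)
      = (S ** transpose (mp_pinv S)) ** ?R"
    by (simp add: matrix_transpose_mul matrix_mul_assoc
        flip: transpose_oblique_proj(1)[OF W V sum int])
  also have "S ** transpose (mp_pinv S) = mp_pinv S ** S"
    using pinv S by (metis matrix_transpose_mul penrose_inverse_def)
  also have "(mp_pinv S ** S) ** ?R = ?R"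
  proof -
    have "(mp_pinv S ** S) *v (?R *v x) = ?R *v x" for x
    proof (rule penrose_inverse_mult_fixes[OF pinv])
      fix z assume "S *v z = 0"
      then show "z \<bullet> (?R *v x) = 0"
        using ker oblique_proj_mem(1)[OF W subspace_orthogonal_comp sum int]
        by (auto simp: orthogonal_comp_def orthogonal_def inner_commute)
    qed
    then show ?thesis
      by (simp add: matrix_eq flip: matrix_vector_mul_assoc)
  qed
  finally show ?thesis .
qed

section \<open>Second moments and the frame operator\<close>

lemma P2_AE_mem:
  assumes "P2 W \<mu>"
  shows "AE x in \<mu>. x \<in> W"
proof -
  interpret prob_space \<mu>
    using assms by (simp add: P2_def)
  have "W \<in> events" "emeasure \<mu> W = 1"
    using assms unfolding P2_def by blast+
  then show ?thesis
    by (simp add: AE_in_set_eq_1 measure_def)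
qed

lemma borel_measurable_outer [measurable]:
  assumes "f \<in> borel_measurable M" "g \<in> borel_measurable M"
  shows "(\<lambda>x. outer (f x) (g x) :: real^'n^'n) \<in> borel_measurable M"
proof -
  have "continuous_on UNIV (\<lambda>p::(real^'n) \<times> (real^'n). outer (fst p) (snd p))"
    unfolding outer_def by (intro continuous_on_vec_lambda continuous_intros)
  then show ?thesis
    by (rule borel_measurable_continuous_Pair[OF assms, where H=outer])
qed

lemma integrable_outer:
  fixes f g :: "'a \<Rightarrow> real^'n"
  assumes [measurable]: "f \<in> borel_measurable M" "g \<in> borel_measurable M"
    and "integrable M (\<lambda>x. (norm (f x))\<^sup>2)" "integrable M (\<lambda>x. (norm (g x))\<^sup>2)"
  shows "integrable M (\<lambda>x. outer (f x) (g x))"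
proof (rule Bochner_Integration.integrable_bound)
  show "integrable M (\<lambda>x. (norm (f x))\<^sup>2 + (norm (g x))\<^sup>2)"
    using assms by simp
  have "norm a * norm b \<le> (norm a)\<^sup>2 + (norm b)\<^sup>2" for a b :: "real^'n"
    using sum_squares_bound[of "norm a" "norm b"]
      mult_nonneg_nonneg[OF norm_ge_zero norm_ge_zero, of a b]
    by linarith
  then show "AE x in M. norm (outer (f x) (g x)) \<le> norm ((norm (f x))\<^sup>2 + (norm (g x))\<^sup>2)"
    by (simp add: norm_outer)
qed measurable

lemma integrable_norm_sq_add:
  fixes f g :: "'a \<Rightarrow> real^'n"
  assumes [measurable]: "f \<in> borel_measurable M" "g \<in> borel_measurable M"
    and "integrable M (\<lambda>x. (norm (f x))\<^sup>2)" "integrable M (\<lambda>x. (norm (g x))\<^sup>2)"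
  shows "integrable M (\<lambda>x. (norm (f x + g x))\<^sup>2)"
proof (rule Bochner_Integration.integrable_bound)
  show "integrable M (\<lambda>x. 2 * (norm (f x))\<^sup>2 + 2 * (norm (g x))\<^sup>2)"
    using assms by simp
  have "(norm (a + b))\<^sup>2 \<le> 2 * (norm a)\<^sup>2 + 2 * (norm b)\<^sup>2" for a b :: "real^'n"
  proof -
    have "(norm (a + b))\<^sup>2 \<le> (norm a + norm b)\<^sup>2"
      by (rule power_mono[OF norm_triangle_ineq norm_ge_zero])
    also have "\<dots> \<le> 2 * (norm a)\<^sup>2 + 2 * (norm b)\<^sup>2"
      using zero_le_power2[of "norm a - norm b"] unfolding power2_diff power2_sum by linarith
    finally show ?thesis .
  qed
  then show "AE x in M.
      norm ((norm (f x + g x))\<^sup>2) \<le> norm (2 * (norm (f x))\<^sup>2 + 2 * (norm (g x))\<^sup>2)"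
    by simp
qed measurable

lemma integrable_norm_sq_matrix_vector_mult:
  fixes f :: "'a \<Rightarrow> real^'n" and A :: "real^'n^'m"
  assumes [measurable]: "f \<in> borel_measurable M" and "integrable M (\<lambda>x. (norm (f x))\<^sup>2)"
  shows "integrable M (\<lambda>x. (norm (A *v f x))\<^sup>2)"
proof -
  obtain K where K: "\<And>x. norm (A *v x) \<le> norm x * K"
    using bounded_linear.bounded[OF matrix_vector_mul_bounded_linear] by blast
  have [measurable]: "(\<lambda>x. A *v x) \<in> borel_measurable borel"
    by (intro borel_measurable_continuous_onI linear_continuous_on matrix_vector_mul_bounded_linear)
  have bound: "(norm (A *v x))\<^sup>2 \<le> K\<^sup>2 * (norm x)\<^sup>2" for x
    using power_mono[OF K norm_ge_zero, of x 2] by (simp add: power_mult_distrib mult.commute)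
  show ?thesis
  proof (rule Bochner_Integration.integrable_bound)
    show "integrable M (\<lambda>x. K\<^sup>2 * (norm (f x))\<^sup>2)"
      using assms by simp
    show "AE x in M. norm ((norm (A *v f x))\<^sup>2) \<le> norm (K\<^sup>2 * (norm (f x))\<^sup>2)"
      using bound by simp
  qed measurable
qed

lemma P2_distr_iff:
  fixes W V :: "(real^'n) set"
  assumes \<mu>: "P2 W \<mu>" and V: "subspace V"
    and f: "f \<in> borel_measurable borel" and fWV: "f ` W \<subseteq> V"
  shows "P2 V (distr \<mu> borel f) \<longleftrightarrow> integrable \<mu> (\<lambda>x. (norm (f x))\<^sup>2)"
proof -
  interpret prob_space \<mu>
    using \<mu> by (simp add: P2_def)
  have "sets \<mu> = sets borel"
    using \<mu> by (simp add: P2_def)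
  then have f_\<mu>: "f \<in> borel_measurable \<mu>"
    using f measurable_cong_sets[OF _ refl] by blast
  have V_borel: "V \<in> sets borel"
    using closed_subspace[OF V] by (rule borel_closed)
  have "AE x in \<mu>. x \<in> f -` V \<inter> space \<mu>"
    using P2_AE_mem[OF \<mu>] AE_space by eventually_elim (use fWV in blast)
  then have "emeasure (distr \<mu> borel f) V = 1"
    using emeasure_eq_1_AE[OF measurable_sets[OF f_\<mu> V_borel]]
    by (simp add: emeasure_distr[OF f_\<mu> V_borel])
  moreover have "(\<lambda>y::real^'n. (norm y)\<^sup>2) \<in> borel_measurable borel"
    by measurable
  then have "integrable (distr \<mu> borel f) (\<lambda>y. (norm y)\<^sup>2) \<longleftrightarrow> integrable \<mu> (\<lambda>x. (norm (f x))\<^sup>2)"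
    by (rule integrable_distr_eq[OF f_\<mu>])
  ultimately show ?thesis
    unfolding P2_def using prob_space_distr[OF f_\<mu>] V_borel by simp
qed

lemma integrable_outer_self:
  fixes \<mu> :: "(real^'n) measure"
  assumes "sets \<mu> = sets borel" "integrable \<mu> (\<lambda>y. (norm y)\<^sup>2)"
  shows "integrable \<mu> (\<lambda>y. outer y y)"
  using assms integrable_outer[of "\<lambda>y. y" \<mu> "\<lambda>y. y"] by (simp add: measurable_ident_sets)

lemma inner_frame_op:
  fixes \<mu> :: "(real^'n) measure"
  assumes "sets \<mu> = sets borel" "integrable \<mu> (\<lambda>y. (norm y)\<^sup>2)"
  shows "u \<bullet> (frame_op \<mu> *v v) = (\<integral>y. (u \<bullet> y) * (y \<bullet> v) \<partial>\<mu>)"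
proof -
  have "linear (\<lambda>A::real^'n^'n. u \<bullet> (A *v v))"
    by (rule linearI)
      (simp_all add: matrix_vector_mult_add_rdistrib inner_add_right flip: scaleR_matrix_vector_assoc)
  then have "bounded_linear (\<lambda>A::real^'n^'n. u \<bullet> (A *v v))"
    by (simp add: linear_conv_bounded_linear)
  from integral_bounded_linear[OF this integrable_outer_self[OF assms]] show ?thesis
    unfolding frame_op_def by (simp add: outer_mult_vec mult.commute)
qed

lemma frame_op_symmetric:
  fixes \<mu> :: "(real^'n) measure"
  assumes "sets \<mu> = sets borel" "integrable \<mu> (\<lambda>y. (norm y)\<^sup>2)"
  shows "transpose (frame_op \<mu>) = frame_op \<mu>"
  unfolding transpose_eq_self_iff_inner
proof (intro allI)
  fix u v
  show "u \<bullet> (frame_op \<mu> *v v) = (frame_op \<mu> *v u) \<bullet> v"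
    unfolding inner_commute[of "frame_op \<mu> *v u"] inner_frame_op[OF assms]
    by (simp add: inner_commute mult.commute)
qed

lemma integral_outer_matrix_vector_mult:
  fixes \<mu> :: "(real^'n) measure"
  assumes "sets \<mu> = sets borel" "integrable \<mu> (\<lambda>y. (norm y)\<^sup>2)"
  shows "(\<integral>x. outer x (M *v x) \<partial>\<mu>) = frame_op \<mu> ** transpose M"
proof -
  have "linear (\<lambda>A::real^'n^'n. A ** transpose M)"
    by (rule linearI) (simp_all add: matrix_add_rdistrib flip: scalar_matrix_assoc)
  then have "bounded_linear (\<lambda>A::real^'n^'n. A ** transpose M)"
    by (simp add: linear_conv_bounded_linear)
  from integral_bounded_linear[OF this integrable_outer_self[OF assms]] show ?thesis
    unfolding frame_op_def by (simp add: outer_mult_transpose)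
qed

lemma prob_frame_kernel:
  fixes W :: "(real^'n) set"
  assumes W: "subspace W" and frame: "prob_frame W \<mu>" and z: "frame_op \<mu> *v z = 0"
  shows "z \<in> orthogonal_comp W"
proof -
  have \<mu>: "P2 W \<mu>"
    using frame by (simp add: prob_frame_def)
  then have sets: "sets \<mu> = sets borel" and sq: "integrable \<mu> (\<lambda>y. (norm y)\<^sup>2)"
    by (simp_all add: P2_def)
  obtain c where c: "0 < c" "\<And>x. x \<in> W \<Longrightarrow> c * (norm x)\<^sup>2 \<le> (\<integral>t. \<bar>x \<bullet> t\<bar>\<^sup>2 \<partial>\<mu>)"
    using frame by (auto simp: prob_frame_def)
  obtain y z' where y: "y \<in> W" and z': "z' \<in> orthogonal_comp W" and yz: "z = y + z'"
    using subspace_sum_orthogonal_comp[OF W] set_plus_elim by blast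
  have AE: "AE t in \<mu>. \<bar>y \<bullet> t\<bar>\<^sup>2 = (z \<bullet> t) * (t \<bullet> z)"
    using P2_AE_mem[OF \<mu>]
  proof eventually_elim
    case (elim t)
    then have "z' \<bullet> t = 0"
      using z' by (simp add: orthogonal_comp_def orthogonal_def inner_commute)
    then show ?case
      by (simp add: yz inner_add_left inner_add_right power2_eq_square inner_commute)
  qed
  have "(\<integral>t. \<bar>y \<bullet> t\<bar>\<^sup>2 \<partial>\<mu>) = (\<integral>t. (z \<bullet> t) * (t \<bullet> z) \<partial>\<mu>)"
    by (rule integral_cong_AE[OF _ _ AE])
      (simp_all add: measurable_cong_sets[OF sets refl] borel_measurable_continuous_onI continuous_intros)
  also have "\<dots> = z \<bullet> (frame_op \<mu> *v z)"
    by (rule inner_frame_op[symmetric, OF sets sq])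
  finally have "(\<integral>t. \<bar>y \<bullet> t\<bar>\<^sup>2 \<partial>\<mu>) = 0"
    using z by simp
  then have "c * (norm y)\<^sup>2 \<le> 0"
    using c(2)[OF y] by simp
  then have "y = 0"
    using c(1) by (simp add: mult_le_0_iff)
  then show ?thesis
    using yz z' by simp
qed

section \<open>Oblique duals supported on a graph\<close>

lemma coupling_graph:
  assumes "prob_space \<mu>" "sets \<mu> = sets borel" "T \<in> borel_measurable borel"
  shows "coupling (distr \<mu> (borel \<Otimes>\<^sub>M borel) (\<lambda>x. (x, T x))) \<mu> (distr \<mu> borel T)"
proof -
  have [measurable]: "T \<in> borel_measurable \<mu>" "(\<lambda>x. x) \<in> borel_measurable \<mu>"
    using assms(2,3) measurable_cong_sets[OF _ refl] by (blast, simp)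
  have graph: "(\<lambda>x. (x, T x)) \<in> measurable \<mu> (borel \<Otimes>\<^sub>M borel)"
    by measurable
  show ?thesis
    unfolding coupling_def
    using prob_space.prob_space_distr[OF assms(1) graph] distr_distr[OF measurable_fst graph]
      distr_distr[OF measurable_snd graph] distr_id2[OF assms(2)[symmetric]]
    by (simp add: comp_def)
qed

lemma integral_outer_graph:
  assumes "sets \<mu> = sets borel" "T \<in> borel_measurable borel"
  shows "(\<integral>p. outer (fst p) (snd p) \<partial>distr \<mu> (borel \<Otimes>\<^sub>M borel) (\<lambda>x. (x, T x)))
    = (\<integral>x. outer x (T x) \<partial>\<mu>)"
proof -
  have [measurable]: "T \<in> borel_measurable \<mu>" "(\<lambda>x. x) \<in> borel_measurable \<mu>"
    using assms measurable_cong_sets[OF _ refl] by (blast, simp)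
  show ?thesis
    by (subst integral_distr) simp_all
qed

lemma oblique_dual_graph_iff:
  fixes W V :: "(real^'n) set"
  assumes \<mu>: "P2 W \<mu>" and V: "subspace V" and T: "T \<in> borel_measurable borel" "T ` W \<subseteq> V"
  shows "oblique_dual W V \<mu> (distr \<mu> borel T) (distr \<mu> (borel \<Otimes>\<^sub>M borel) (\<lambda>x. (x, T x)))
    \<longleftrightarrow> integrable \<mu> (\<lambda>x. (norm (T x))\<^sup>2)
      \<and> (\<integral>x. outer x (T x) \<partial>\<mu>) = oblique_proj W (orthogonal_comp V)"
proof -
  have "prob_space \<mu>" "sets \<mu> = sets borel"
    using \<mu> by (simp_all add: P2_def)
  then show ?thesis
    unfolding oblique_dual_def
    using coupling_graph[OF _ _ T(1)] integral_outer_graph[OF _ T(1)] P2_distr_iff[OF \<mu> V T]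
    by simp
qed

lemma integral_outer_add_AE:
  fixes f g T :: "real^'n \<Rightarrow> real^'n"
  assumes sets: "sets \<mu> = sets borel" and sq: "integrable \<mu> (\<lambda>x. (norm x)\<^sup>2)"
    and meas: "f \<in> borel_measurable borel" "g \<in> borel_measurable borel" "T \<in> borel_measurable borel"
    and f: "integrable \<mu> (\<lambda>x. (norm (f x))\<^sup>2)" and g: "integrable \<mu> (\<lambda>x. (norm (g x))\<^sup>2)"
    and T: "AE x in \<mu>. T x = f x + g x"
  shows "integrable \<mu> (\<lambda>x. (norm (T x))\<^sup>2)"
    and "(\<integral>x. outer x (T x) \<partial>\<mu>) = (\<integral>x. outer x (f x) \<partial>\<mu>) + (\<integral>x. outer x (g x) \<partial>\<mu>)"
proof -
  have [measurable]: "f \<in> borel_measurable \<mu>" "g \<in> borel_measurable \<mu>" "T \<in> borel_measurable \<mu>"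
    "(\<lambda>x. x) \<in> borel_measurable \<mu>"
    using meas by (simp_all add: measurable_cong_sets[OF sets refl] measurable_ident_sets[OF sets])
  show "integrable \<mu> (\<lambda>x. (norm (T x))\<^sup>2)"
    by (rule integrable_cong_AE_imp[OF integrable_norm_sq_add[OF _ _ f g]]) (use T in auto)
  have "(\<integral>x. outer x (T x) \<partial>\<mu>) = (\<integral>x. outer x (f x) + outer x (g x) \<partial>\<mu>)"
    by (rule integral_cong_AE) (use T in \<open>auto simp: outer_add_right\<close>)
  also have "\<dots> = (\<integral>x. outer x (f x) \<partial>\<mu>) + (\<integral>x. outer x (g x) \<partial>\<mu>)"
    using sq f g by (intro Bochner_Integration.integral_add integrable_outer) simp_all
  finally show "(\<integral>x. outer x (T x) \<partial>\<mu>) = (\<integral>x. outer x (f x) \<partial>\<mu>) + (\<integral>x. outer x (g x) \<partial>\<mu>)"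
    .
qed

lemma integral_outer_eq_iff_linear_plus_null:
  fixes W V :: "(real^'n) set" and M :: "real^'n^'n"
  assumes \<mu>: "P2 W \<mu>" and V: "subspace V" and M: "(\<lambda>x. M *v x) ` W \<subseteq> V"
    and T: "T \<in> borel_measurable borel" "T ` W \<subseteq> V"
  shows "integrable \<mu> (\<lambda>x. (norm (T x))\<^sup>2)
      \<and> (\<integral>x. outer x (T x) \<partial>\<mu>) = (\<integral>x. outer x (M *v x) \<partial>\<mu>)
    \<longleftrightarrow> (\<exists>h. h \<in> borel_measurable borel \<and> h ` W \<subseteq> V \<and> integrable \<mu> (\<lambda>x. (norm (h x))\<^sup>2) \<and>
          (\<integral>x. outer x (h x) \<partial>\<mu>) = 0 \<and> (\<forall>x\<in>W. T x = M *v x + h x))"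
    (is "?solution \<longleftrightarrow> (\<exists>h. ?null h)")
proof -
  have sets: "sets \<mu> = sets borel" and sq: "integrable \<mu> (\<lambda>x. (norm x)\<^sup>2)"
    using \<mu> by (simp_all add: P2_def)
  have M_meas: "(\<lambda>x. M *v x) \<in> borel_measurable borel"
    by (intro borel_measurable_continuous_onI linear_continuous_on matrix_vector_mul_bounded_linear)
  have M_sq: "integrable \<mu> (\<lambda>x. (norm (M *v x))\<^sup>2)"
    using sq measurable_ident_sets[OF sets] by (intro integrable_norm_sq_matrix_vector_mult) simp_all
  note sum = integral_outer_add_AE[OF sets sq M_meas]
  show ?thesis
  proof
    assume ?solution
    define h where "h x = T x - M *v x" for x
    have h_meas: "h \<in> borel_measurable borel"
      unfolding h_def using T(1) M_meas by measurable
    have "h ` W \<subseteq> V"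
      using T(2) M subspace_diff[OF V] by (auto simp: h_def)
    moreover have h_sq: "integrable \<mu> (\<lambda>x. (norm (h x))\<^sup>2)"
      using integrable_norm_sq_add[of T \<mu> "\<lambda>x. - (M *v x)"] T(1) M_meas M_sq \<open>?solution\<close>
      by (simp add: h_def measurable_cong_sets[OF sets refl])
    moreover have "(\<integral>x. outer x (h x) \<partial>\<mu>) = 0"
      using sum(2)[OF h_meas T(1) M_sq h_sq] \<open>?solution\<close> by (simp add: h_def)
    ultimately show "\<exists>h. ?null h"
      using h_meas by (intro exI[of _ h]) (simp add: h_def)
  next
    assume "\<exists>h. ?null h"
    then obtain h where h: "?null h"
      by blast
    have "AE x in \<mu>. T x = M *v x + h x"
      using P2_AE_mem[OF \<mu>] h by auto
    with h show ?solution
      using sum[of h] T(1) M_sq by simp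
  qed
qed

theorem corollary4p7:
  fixes W V :: "(real^'n) set" and \<mu> :: "(real^'n) measure" and T :: "real^'n \<Rightarrow> real^'n"
  assumes "subspace W" and "subspace V"
    and "W + orthogonal_comp V = UNIV" and "W \<inter> orthogonal_comp V = {0}"
    and "prob_frame W \<mu>"
    and "T \<in> borel_measurable borel" and "T ` W \<subseteq> V"
  shows "oblique_dual W V \<mu> (distr \<mu> borel T) (distr \<mu> (borel \<Otimes>\<^sub>M borel) (\<lambda>x. (x, T x)))
    \<longleftrightarrow> (\<exists>h :: real^'n \<Rightarrow> real^'n. h \<in> borel_measurable borel \<and> h ` W \<subseteq> V \<and>
           P2 V (distr \<mu> borel h) \<and>
           (\<integral>x. outer x (h x) \<partial>\<mu>) = 0 \<and>
           (\<forall>x\<in>W. T x = (oblique_proj V (orthogonal_comp W) ** mp_pinv (frame_op \<mu>)) *v x + h x))"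
proof -
  let ?M = "oblique_proj V (orthogonal_comp W) ** mp_pinv (frame_op \<mu>)"
  have \<mu>: "P2 W \<mu>"
    using assms(5) by (simp add: prob_frame_def)
  then have sets: "sets \<mu> = sets borel" and sq: "integrable \<mu> (\<lambda>y. (norm y)\<^sup>2)"
    by (simp_all add: P2_def)
  have M_integral: "(\<integral>x. outer x (?M *v x) \<partial>\<mu>) = oblique_proj W (orthogonal_comp V)"
    unfolding integral_outer_matrix_vector_mult[OF sets sq]
    using symmetric_mult_transpose_oblique_proj_pinv[OF assms(1-4) frame_op_symmetric[OF sets sq]]
      prob_frame_kernel[OF assms(1,5)] by blast
  have M_V: "(\<lambda>x. ?M *v x) ` W \<subseteq> V"
    using transpose_oblique_proj(2)[OF assms(1-4)] by (auto simp flip: matrix_vector_mul_assoc)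
  have "oblique_dual W V \<mu> (distr \<mu> borel T) (distr \<mu> (borel \<Otimes>\<^sub>M borel) (\<lambda>x. (x, T x)))
    \<longleftrightarrow> (\<exists>h. h \<in> borel_measurable borel \<and> h ` W \<subseteq> V \<and> integrable \<mu> (\<lambda>x. (norm (h x))\<^sup>2) \<and>
          (\<integral>x. outer x (h x) \<partial>\<mu>) = 0 \<and> (\<forall>x\<in>W. T x = ?M *v x + h x))"
    unfolding oblique_dual_graph_iff[OF \<mu> assms(2,6,7)] M_integral[symmetric]
    by (rule integral_outer_eq_iff_linear_plus_null[OF \<mu> assms(2) M_V assms(6,7)])
  also have "\<dots> \<longleftrightarrow> (\<exists>h. h \<in> borel_measurable borel \<and> h ` W \<subseteq> V \<and> P2 V (distr \<mu> borel h) \<and>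
          (\<integral>x. outer x (h x) \<partial>\<mu>) = 0 \<and> (\<forall>x\<in>W. T x = ?M *v x + h x))"
    using P2_distr_iff[OF \<mu> assms(2)] by blast
  finally show ?thesis .
qed

end
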